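(* For $n\ge 3$ let $T_n$ be the set of all 3-element sets of proper $n$-sided one-step dice in which no two of the three dice tie, and let $I_n\subseteq T_n$ be the subset of intransitive ones. Then $\lim_{n\to\infty}|I_n|/|T_n| = 1/4$.
   Context: An $n$-sided die is a non-decreasing $n$-tuple of integers. The standard die is $P_n=(1,2,\dots,n)$. For integers $a,b$ with $1\le a\le n-1$, $2\le b\le n$, $b\notin\{a,a+1\}$, $s(a,b)$ is the die obtained from $P_n$ by replacing the face with value $a$ by $a+1$ and the face with value $b$ by $b-1$ (faces then sorted); these are the proper $n$-sided one-step dice. For dice $A=(a_i)$, $B=(b_j)$, $A>B$ ("$A$ beats $B$") means $\#\{(i,j):a_i>b_j\}>\#\{(i,j):b_j>a_i\}$ over $(i,j)\in\{1,\dots,n\}^2$; if equal, $A$ and $B$ tie. A set of three dice with no ties is intransitive if its members can be labeled $A,B,C$ with $A>B$, $B>C$, $C>A$, and transitive otherwise. *)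

theory Defs
  imports Complex_Main
begin

text \<open>An n-sided die is a non-decreasing list of integers of length n.\<close>

definition standard_die :: "nat \<Rightarrow> int list" where
  "standard_die n = [1..int n]"

definition one_step :: "nat \<Rightarrow> int \<Rightarrow> int \<Rightarrow> int list" where
  "one_step n a b = sort (map (\<lambda>x. if x = a then a + 1 else if x = b then b - 1 else x)
                              (standard_die n))"

definition proper_one_step_dice :: "nat \<Rightarrow> int list set" where
  "proper_one_step_dice n =
     {one_step n a b | a b. 1 \<le> a \<and> a \<le> int n - 1 \<and> 2 \<le> b \<and> b \<le> int n
                           \<and> b \<noteq> a \<and> b \<noteq> a + 1}"

definition wins :: "int list \<Rightarrow> int list \<Rightarrow> nat" where
  "wins A B = card {(i, j). i < length A \<and> j < length B \<and> A ! i > B ! j}"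

definition beats :: "int list \<Rightarrow> int list \<Rightarrow> bool" where
  "beats A B \<longleftrightarrow> wins A B > wins B A"

definition ties :: "int list \<Rightarrow> int list \<Rightarrow> bool" where
  "ties A B \<longleftrightarrow> wins A B = wins B A"

definition tie_free_triples :: "nat \<Rightarrow> int list set set" where
  "tie_free_triples n =
     {S. S \<subseteq> proper_one_step_dice n \<and> card S = 3 \<and>
         (\<forall>A\<in>S. \<forall>B\<in>S. A \<noteq> B \<longrightarrow> \<not> ties A B)}"

definition intransitive :: "int list set \<Rightarrow> bool" where
  "intransitive S \<longleftrightarrow> (\<exists>A B C. S = {A, B, C} \<and> beats A B \<and> beats B C \<and> beats C A)"

definition intransitive_triples :: "nat \<Rightarrow> int list set set" where
  "intransitive_triples n = {S \<in> tie_free_triples n. intransitive S}"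

end

theory Submission
  imports Defs "HOL-Library.Multiset" "HOL-Real_Asymp.Real_Asymp"
begin

(* Write s(a,b) for one_step n a b and let margin A B = wins A B - wins B A, so that A beats B
   iff the margin is positive.  Expanding both dice around the standard die P_n, the margin of
   s(a,b) against s(c,d) is a second difference of sgn (x - y): it only sees which of the moved
   faces a, a+1, b-1, b are adjacent to c, c+1, d-1, d.  The mirror die s(b-1,a+1) deviates
   from P_n by the negative of the deviation of s(a,b), so it negates every margin of s(a,b);
   it is proper unless b = a + 2.  In an ordered tie-free triple with at most one such
   exceptional die, two single mirrorings and their composite turn the triple into four
   triples that realise the four sign patterns of its three margins with a fixed product, and
   exactly one of these patterns is cyclic.  Triples with two exceptional dice number O(n^2),
   while tie-free triples number at least about (n/3)^3, so the proportion of intransitive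
   triples tends to 1/4. *)

section \<open>Margins\<close>

definition margin :: "int list \<Rightarrow> int list \<Rightarrow> int" where
  "margin A B = int (wins A B) - int (wins B A)"

lemma beats_iff_margin_pos: "beats A B \<longleftrightarrow> margin A B > 0"
  by (simp add: beats_def margin_def)

lemma ties_iff_margin_eq_0: "ties A B \<longleftrightarrow> margin A B = 0"
  by (simp add: ties_def margin_def)

lemma margin_swap: "margin B A = - margin A B"
  by (simp add: margin_def)

lemma margin_self: "margin A A = 0"
  by (simp add: margin_def)

lemma wins_eq_sum_list: "int (wins A B) = (\<Sum>x\<leftarrow>A. \<Sum>y\<leftarrow>B. of_bool (y < x))"
proof -
  have "{(i, j). i < length A \<and> j < length B \<and> A ! i > B ! j}
        = (SIGMA i:{..<length A}. {j. j < length B \<and> B ! j < A ! i})"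
    by auto
  then have "wins A B = (\<Sum>i<length A. card {j. j < length B \<and> B ! j < A ! i})"
    unfolding wins_def by (simp add: card_SigmaI)
  also have "\<dots> = (\<Sum>i<length A. length (filter (\<lambda>y. y < A ! i) B))"
    by (simp add: length_filter_conv_card)
  finally have "wins A B = (\<Sum>x\<leftarrow>A. length (filter (\<lambda>y. y < x) B))"
    by (simp add: sum_list_sum_nth atLeast0LessThan)
  moreover have "int (length (filter P B)) = (\<Sum>y\<leftarrow>B. of_bool (P y))" for P
    by (induction B) auto
  ultimately show ?thesis
    by (simp flip: sum_list_of_nat add: o_def)
qed

lemma margin_eq_sum_list_sgn: "margin A B = (\<Sum>x\<leftarrow>A. \<Sum>y\<leftarrow>B. sgn (x - y))"
proof -
  have "of_bool (y < x) - of_bool (x < y) = sgn (x - y)" for x y :: int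
    by (simp add: sgn_if)
  moreover have "(\<Sum>y\<leftarrow>B. \<Sum>x\<leftarrow>A. h x y) = (\<Sum>x\<leftarrow>A. \<Sum>y\<leftarrow>B. h x y)"
    for h :: "int \<Rightarrow> int \<Rightarrow> int"
    by (induction A) (simp_all add: sum_list_addf)
  ultimately show ?thesis
    unfolding margin_def wins_eq_sum_list by (simp flip: sum_list_subtractf)
qed

lemma sum_list_sort: "(\<Sum>x\<leftarrow>sort xs. h x) = (\<Sum>x\<leftarrow>xs. (h x :: 'b::comm_monoid_add))"
  by (metis mset_map mset_sort sum_mset_sum_list)

lemma margin_sort_map:
  assumes "distinct xs" "distinct ys"
  shows "margin (sort (map f xs)) (sort (map g ys)) = (\<Sum>i\<in>set xs. \<Sum>j\<in>set ys. sgn (f i - g j))"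
  using assms
  by (simp add: margin_eq_sum_list_sgn sum_list_sort sum_list_distinct_conv_sum_set o_def)

lemma margin_singleton_sort_map:
  assumes "distinct ys"
  shows "margin [t] (sort (map g ys)) = (\<Sum>j\<in>set ys. sgn (t - g j))"
  using assms
  by (simp add: margin_eq_sum_list_sgn sum_list_sort sum_list_distinct_conv_sum_set o_def)

lemma sgn_diff_commute: "sgn (x - y) = - sgn (y - x :: int)"
  by (simp add: sgn_if)

lemma sum_sgn_square_eq_0: "(\<Sum>i\<in>S. \<Sum>j\<in>S. sgn (i - j :: int)) = 0"
proof -
  have "(\<Sum>i\<in>S. \<Sum>j\<in>S. sgn (i - j)) = (\<Sum>j\<in>S. \<Sum>i\<in>S. sgn (i - j))"
    by (rule sum.swap)
  also have "\<dots> = (\<Sum>j\<in>S. \<Sum>i\<in>S. - sgn (j - i))"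
    by (intro sum.cong refl sgn_diff_commute)
  also have "\<dots> = - (\<Sum>i\<in>S. \<Sum>j\<in>S. sgn (i - j))"
    by (simp add: sum_negf)
  finally show ?thesis
    by simp
qed

lemma sum_sgn_interval:
  fixes x m :: int
  assumes "1 \<le> x" "x \<le> m"
  shows "(\<Sum>j\<in>{1..m}. sgn (x - j)) = 2 * x - m - 1"
proof -
  have "(\<Sum>j\<in>{1..m}. sgn (x - j)) = (\<Sum>j\<in>{1..m}. of_bool (j < x) - of_bool (x < j))"
    by (intro sum.cong) (auto simp: sgn_if)
  also have "\<dots> = int (card ({1..m} \<inter> {j. j < x})) - int (card ({1..m} \<inter> {j. x < j}))"
    by (simp add: sum_subtractf)
  also have "{1..m} \<inter> {j. j < x} = {1..x - 1}"
    using assms by auto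
  also have "{1..m} \<inter> {j. x < j} = {x + 1..m}"
    using assms by auto
  finally show ?thesis
    using assms by simp
qed

lemma card_enumerations_of_3_set:
  assumes "card S = 3"
  shows "card {(x, y, z). distinct [x, y, z] \<and> {x, y, z} = S} = 6"
proof -
  obtain u v w where S: "S = {u, v, w}" and uvw: "distinct [u, v, w]"
    using assms by (auto simp: card_3_iff)
  let ?perms = "{(u, v, w), (u, w, v), (v, u, w), (v, w, u), (w, u, v), (w, v, u)}"
  have "{(x, y, z). distinct [x, y, z] \<and> {x, y, z} = S} = ?perms"
  proof (intro set_eqI iffI)
    fix t
    assume "t \<in> {(x, y, z). distinct [x, y, z] \<and> {x, y, z} = S}"
    then obtain x y z where t: "t = (x, y, z)" "distinct [x, y, z]" and xyz: "{x, y, z} = S"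
      by auto
    have "x \<in> S" "y \<in> S" "z \<in> S"
      using xyz by auto
    then show "t \<in> ?perms"
      using t uvw unfolding S by auto
  next
    fix t
    assume "t \<in> ?perms"
    then show "t \<in> {(x, y, z). distinct [x, y, z] \<and> {x, y, z} = S}"
      using uvw unfolding S by (auto simp: insert_commute)
  qed
  then show ?thesis
    using uvw by simp
qed

lemma card_enumerations_of_3_sets:
  assumes "finite F" "\<And>S. S \<in> F \<Longrightarrow> card S = 3"
  shows "card {(x, y, z). distinct [x, y, z] \<and> {x, y, z} \<in> F} = 6 * card F"
proof -
  define enum where "enum S = {(x, y, z). distinct [x, y, z] \<and> {x, y, z} = S}" for S :: "'a set"
  have "{(x, y, z). distinct [x, y, z] \<and> {x, y, z} \<in> F} = (\<Union>S\<in>F. enum S)"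
    unfolding enum_def by auto
  moreover have "card (enum S) = 6" if "S \<in> F" for S
    unfolding enum_def using assms(2)[OF that] by (rule card_enumerations_of_3_set)
  moreover have "finite (enum S)" if "S \<in> F" for S
    using calculation(2)[OF that] by (intro card_ge_0_finite) simp
  moreover have "enum S \<inter> enum S' = {}" if "S \<noteq> S'" for S S'
    using that unfolding enum_def by auto
  ultimately show ?thesis
    using assms(1) by (simp add: card_UN_disjoint)
qed

definition ordered_tie_free :: "('a \<Rightarrow> 'a \<Rightarrow> int) \<Rightarrow> 'a set \<Rightarrow> ('a \<times> 'a \<times> 'a) set" where
  "ordered_tie_free s V =
     {(x, y, z). x \<in> V \<and> y \<in> V \<and> z \<in> V \<and> s x y \<noteq> 0 \<and> s y z \<noteq> 0 \<and> s x z \<noteq> 0}"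

fun cyclic :: "('a \<Rightarrow> 'a \<Rightarrow> int) \<Rightarrow> 'a \<times> 'a \<times> 'a \<Rightarrow> bool" where
  "cyclic s (x, y, z) \<longleftrightarrow>
     (s x y > 0 \<and> s y z > 0 \<and> s z x > 0) \<or> (s y x > 0 \<and> s z y > 0 \<and> s x z > 0)"

fun at_least_two_in :: "'a set \<Rightarrow> 'a \<times> 'a \<times> 'a \<Rightarrow> bool" where
  "at_least_two_in E (x, y, z) \<longleftrightarrow> (x \<in> E \<and> y \<in> E) \<or> (y \<in> E \<and> z \<in> E) \<or> (x \<in> E \<and> z \<in> E)"

lemma finite_ordered_tie_free: "finite V \<Longrightarrow> finite (ordered_tie_free s V)"
  by (rule finite_subset[of _ "V \<times> V \<times> V"]) (auto simp: ordered_tie_free_def)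

lemma distinct_if_ordered_tie_free:
  assumes "\<And>x. s x x = 0" "(x, y, z) \<in> ordered_tie_free s V"
  shows "distinct [x, y, z]"
  using assms by (auto simp: ordered_tie_free_def)

lemma card_ordered_tie_free_image:
  assumes "inj_on f V" and score: "\<And>x y. x \<in> V \<Longrightarrow> y \<in> V \<Longrightarrow> m (f x) (f y) = s x y"
  shows "card (ordered_tie_free m (f ` V)) = card (ordered_tie_free s V)"
    and "card {t \<in> ordered_tie_free m (f ` V). cyclic m t}
           = card {t \<in> ordered_tie_free s V. cyclic s t}"
proof -
  define g where "g = map_prod f (map_prod f f)"
  have inj: "inj_on g A" if "A \<subseteq> ordered_tie_free s V" for A
    using that inj_on_subset[OF map_prod_inj_on[OF assms(1) map_prod_inj_on[OF assms(1) assms(1)]]]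
    by (auto simp: g_def ordered_tie_free_def)
  have image: "ordered_tie_free m (f ` V) = g ` ordered_tie_free s V"
  proof (intro set_eqI iffI)
    fix t
    assume "t \<in> ordered_tie_free m (f ` V)"
    then obtain x y z where "t = g (x, y, z)" "(x, y, z) \<in> ordered_tie_free s V"
      by (auto simp: ordered_tie_free_def g_def score)
    then show "t \<in> g ` ordered_tie_free s V"
      by blast
  qed (auto simp: ordered_tie_free_def g_def score)
  have "{t \<in> ordered_tie_free m (f ` V). cyclic m t}
      = g ` {t \<in> ordered_tie_free s V. cyclic m (g t)}"
    unfolding image by blast
  also have "{t \<in> ordered_tie_free s V. cyclic m (g t)} = {t \<in> ordered_tie_free s V. cyclic s t}"
    by (auto simp: ordered_tie_free_def g_def score)
  finally show "card (ordered_tie_free m (f ` V)) = card (ordered_tie_free s V)"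
    and "card {t \<in> ordered_tie_free m (f ` V). cyclic m t}
           = card {t \<in> ordered_tie_free s V. cyclic s t}"
    using image by (simp_all add: card_image inj)
qed

section \<open>A sign-reversing involution makes a quarter of the triples cyclic\<close>

definition cyclic_signs :: "int \<Rightarrow> int \<Rightarrow> int \<Rightarrow> bool" where
  "cyclic_signs p q w \<longleftrightarrow> (p > 0 \<and> q > 0 \<and> w < 0) \<or> (p < 0 \<and> q < 0 \<and> w > 0)"

lemma cyclic_signs_flips:
  assumes "p \<noteq> 0" "q \<noteq> 0" "w \<noteq> 0"
  shows "of_bool (cyclic_signs p q w) + of_bool (cyclic_signs (- p) q (- w))
       + of_bool (cyclic_signs (- p) (- q) w) + of_bool (cyclic_signs p (- q) (- w)) = (1 :: nat)"
  using assms by (cases "p > 0"; cases "q > 0"; cases "w > 0") (auto simp: cyclic_signs_def)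

locale score_reflection =
  fixes V E :: "'a set" and s :: "'a \<Rightarrow> 'a \<Rightarrow> int" and r :: "'a \<Rightarrow> 'a"
  assumes finite_V: "finite V"
    and score_antisym: "x \<in> V \<Longrightarrow> y \<in> V \<Longrightarrow> s y x = - s x y"
    and reflect_closed: "x \<in> V - E \<Longrightarrow> r x \<in> V - E"
    and reflect_reflect: "x \<in> V - E \<Longrightarrow> r (r x) = x"
    and score_reflect_left: "x \<in> V - E \<Longrightarrow> y \<in> V \<Longrightarrow> s (r x) y = - s x y"
begin

lemma score_reflect_right: "x \<in> V \<Longrightarrow> y \<in> V - E \<Longrightarrow> s x (r y) = - s x y"
  using score_antisym[of x "r y"] score_antisym[of x y] score_reflect_left[of y x]
    reflect_closed[of y]
  by simp

lemma cyclic_iff_signs: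
  "x \<in> V \<Longrightarrow> y \<in> V \<Longrightarrow> z \<in> V \<Longrightarrow> cyclic s (x, y, z) \<longleftrightarrow> cyclic_signs (s x y) (s y z) (s x z)"
  using score_antisym[of x z] score_antisym[of x y] score_antisym[of y z]
  by (auto simp: cyclic_signs_def)

definition regular :: "('a \<times> 'a \<times> 'a) set" where
  "regular = {t \<in> ordered_tie_free s V. \<not> at_least_two_in E t}"

fun flip_left :: "'a \<times> 'a \<times> 'a \<Rightarrow> 'a \<times> 'a \<times> 'a" where
  "flip_left (x, y, z) = (if x \<notin> E then (r x, y, z) else (x, r y, z))"

fun flip_right :: "'a \<times> 'a \<times> 'a \<Rightarrow> 'a \<times> 'a \<times> 'a" where
  "flip_right (x, y, z) = (if z \<notin> E then (x, y, r z) else (x, r y, z))"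

lemma regular_iff:
  "(x, y, z) \<in> regular \<longleftrightarrow> x \<in> V \<and> y \<in> V \<and> z \<in> V \<and> s x y \<noteq> 0 \<and> s y z \<noteq> 0 \<and> s x z \<noteq> 0
     \<and> \<not> at_least_two_in E (x, y, z)"
  by (simp add: regular_def ordered_tie_free_def)

lemma finite_regular: "finite regular"
  using finite_ordered_tie_free[OF finite_V] by (simp add: regular_def)

lemma flip_left_regular:
  assumes "t \<in> regular"
  shows "flip_left t \<in> regular"
proof -
  obtain x y z where t: "t = (x, y, z)"
    by (cases t)
  have xyz: "x \<in> V" "y \<in> V" "z \<in> V" "s x y \<noteq> 0" "s y z \<noteq> 0" "s x z \<noteq> 0"
    "\<not> at_least_two_in E t"
    using assms by (simp_all add: t regular_iff)
  show ?thesis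
  proof (cases "x \<in> E")
    case True
    then have "y \<in> V - E" "z \<notin> E"
      using xyz by (auto simp: t)
    then show ?thesis
      using xyz True reflect_closed[of y]
      by (auto simp: t regular_iff score_reflect_left score_reflect_right)
  next
    case False
    then have "x \<in> V - E"
      using xyz by auto
    then show ?thesis
      using xyz False reflect_closed[of x] by (auto simp: t regular_iff score_reflect_left)
  qed
qed

lemma flip_right_regular:
  assumes "t \<in> regular"
  shows "flip_right t \<in> regular"
proof -
  obtain x y z where t: "t = (x, y, z)"
    by (cases t)
  have xyz: "x \<in> V" "y \<in> V" "z \<in> V" "s x y \<noteq> 0" "s y z \<noteq> 0" "s x z \<noteq> 0"
    "\<not> at_least_two_in E t"
    using assms by (simp_all add: t regular_iff)
  show ?thesis
  proof (cases "z \<in> E")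
    case True
    then have "y \<in> V - E" "x \<notin> E"
      using xyz by (auto simp: t)
    then show ?thesis
      using xyz True reflect_closed[of y]
      by (auto simp: t regular_iff score_reflect_left score_reflect_right)
  next
    case False
    then have "z \<in> V - E"
      using xyz by auto
    then show ?thesis
      using xyz False reflect_closed[of z] by (auto simp: t regular_iff score_reflect_right)
  qed
qed

lemma flip_left_flip_left: "t \<in> regular \<Longrightarrow> flip_left (flip_left t) = t"
  and flip_right_flip_right: "t \<in> regular \<Longrightarrow> flip_right (flip_right t) = t"
proof -
  assume "t \<in> regular"
  moreover obtain x y z where t: "t = (x, y, z)"
    by (cases t)
  ultimately have "x \<in> V" "y \<in> V" "z \<in> V" "\<not> at_least_two_in E t"
    by (simp_all add: regular_iff)
  then show "flip_left (flip_left t) = t" "flip_right (flip_right t) = t"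
    using reflect_closed[of x] reflect_closed[of y] reflect_closed[of z]
      reflect_reflect[of x] reflect_reflect[of y] reflect_reflect[of z]
    by (auto simp: t)
qed

(* Compared with t, the triples flip_left t, flip_right t and flip_left (flip_right t) reverse
   the signs of the two scores involving x, involving y and involving z, in some order. *)
lemma cyclic_orbit:
  assumes "t \<in> regular"
  shows "of_bool (cyclic s t) + of_bool (cyclic s (flip_left t)) + of_bool (cyclic s (flip_right t))
       + of_bool (cyclic s (flip_left (flip_right t))) = (1 :: nat)"
proof -
  obtain x y z where t: "t = (x, y, z)"
    by (cases t)
  have in_V: "x \<in> V" "y \<in> V" "z \<in> V" and nonzero: "s x y \<noteq> 0" "s y z \<noteq> 0" "s x z \<noteq> 0"
    and "\<not> at_least_two_in E t"
    using assms by (simp_all add: t regular_iff)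
  note flips = cyclic_signs_flips[OF nonzero]
  from in_V \<open>\<not> at_least_two_in E t\<close>
  consider "x \<in> E" "y \<in> V - E" "z \<in> V - E" | "x \<in> V - E" "y \<in> V - E" "z \<in> E"
    | "x \<in> V - E" "z \<in> V - E"
    by (auto simp: t)
  then show ?thesis
  proof cases
    case 1
    with reflect_closed[of y] reflect_closed[of z] in_V flips show ?thesis
      by (simp add: t cyclic_iff_signs score_reflect_left score_reflect_right del: cyclic.simps)
  next
    case 2
    with reflect_closed[of x] reflect_closed[of y] in_V flips show ?thesis
      by (simp add: t cyclic_iff_signs score_reflect_left score_reflect_right del: cyclic.simps)
  next
    case 3
    with reflect_closed[of x] reflect_closed[of z] in_V flips show ?thesis
      by (simp add: t cyclic_iff_signs score_reflect_left score_reflect_right del: cyclic.simps)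
  qed
qed

lemma sum_involution_invariant:
  assumes "\<And>t. t \<in> regular \<Longrightarrow> f t \<in> regular" "\<And>t. t \<in> regular \<Longrightarrow> f (f t) = t"
  shows "(\<Sum>t\<in>regular. g (f t)) = (\<Sum>t\<in>regular. g t :: nat)"
  using assms by (intro sum.reindex_bij_witness[where i = f and j = f]) auto

lemma card_regular_cyclic: "4 * card {t \<in> regular. cyclic s t} = card regular"
proof -
  let ?c = "\<lambda>t. of_bool (cyclic s t) :: nat"
  have left: "(\<Sum>t\<in>regular. g (flip_left t)) = (\<Sum>t\<in>regular. g t)" for g :: "_ \<Rightarrow> nat"
    by (intro sum_involution_invariant flip_left_regular flip_left_flip_left)
  have right: "(\<Sum>t\<in>regular. g (flip_right t)) = (\<Sum>t\<in>regular. g t)" for g :: "_ \<Rightarrow> nat"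
    by (intro sum_involution_invariant flip_right_regular flip_right_flip_right)
  have "card regular
      = (\<Sum>t\<in>regular. ?c t + ?c (flip_left t) + ?c (flip_right t) + ?c (flip_left (flip_right t)))"
    by (simp add: cyclic_orbit)
  also have "\<dots> = 4 * (\<Sum>t\<in>regular. ?c t)"
    using right[of "\<lambda>t. ?c (flip_left t)"] left[of ?c] right[of ?c] by (simp add: sum.distrib)
  also have "(\<Sum>t\<in>regular. ?c t) = card {t \<in> regular. cyclic s t}"
    using finite_regular by (simp add: Int_def conj_commute)
  finally show ?thesis ..
qed

lemma cyclic_near_quarter:
  defines "T \<equiv> ordered_tie_free s V"
  shows "\<bar>4 * real (card {t \<in> T. cyclic s t}) - real (card T)\<bar>
           \<le> 3 * real (card {t \<in> T. at_least_two_in E t})"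
proof -
  have fin: "finite T"
    unfolding T_def using finite_V by (rule finite_ordered_tie_free)
  have split: "card {t \<in> T. P t}
      = card {t \<in> T. P t \<and> at_least_two_in E t} + card {t \<in> T. P t \<and> \<not> at_least_two_in E t}" for P
    using fin by (subst card_Un_disjoint [symmetric]) (auto intro: arg_cong [where f = card])
  have "card {t \<in> T. cyclic s t \<and> at_least_two_in E t} \<le> card {t \<in> T. at_least_two_in E t}"
    using fin by (intro card_mono) auto
  moreover have "4 * card {t \<in> T. cyclic s t \<and> \<not> at_least_two_in E t}
      = card {t \<in> T. \<not> at_least_two_in E t}"
  proof -
    have "{t \<in> regular. cyclic s t} = {t \<in> T. cyclic s t \<and> \<not> at_least_two_in E t}"
      by (auto simp: regular_def T_def)
    then show ?thesis
      using card_regular_cyclic by (simp add: regular_def T_def)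
  qed
  ultimately show ?thesis
    using split[of "cyclic s"] split[of "\<lambda>_. True"] by simp
qed

end

section \<open>Margins of one-step dice\<close>

definition shift_faces :: "int \<Rightarrow> int \<Rightarrow> int \<Rightarrow> int" where
  "shift_faces a b x = (if x = a then a + 1 else if x = b then b - 1 else x)"

lemma one_step_eq_sort_map: "one_step n a b = sort (map (shift_faces a b) [1..int n])"
  by (simp add: one_step_def standard_die_def shift_faces_def [abs_def])

definition shift_delta :: "int \<Rightarrow> int \<Rightarrow> (int \<Rightarrow> 'b::ab_group_add) \<Rightarrow> 'b" where
  "shift_delta a b h = h (a + 1) - h a + h (b - 1) - h b"

lemma sum_shift_faces:
  assumes "finite S" "a \<in> S" "b \<in> S" "a \<noteq> b"
  shows "(\<Sum>i\<in>S. h (shift_faces a b i)) = (\<Sum>i\<in>S. h i) + shift_delta a b h"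
proof -
  have "(\<Sum>i\<in>S. h (shift_faces a b i)) - (\<Sum>i\<in>S. h i) = (\<Sum>i\<in>{a, b}. h (shift_faces a b i) - h i)"
    using assms by (subst sum_subtractf [symmetric], intro sum.mono_neutral_right)
      (auto simp: shift_faces_def)
  then show ?thesis
    using assms(4) by (simp add: shift_faces_def shift_delta_def algebra_simps)
qed

lemma shift_delta_reflect: "shift_delta (b - 1) (a + 1) h = - shift_delta a b h"
  by (simp add: shift_delta_def)

lemma shift_delta_sum: "shift_delta a b (\<lambda>x. \<Sum>i\<in>S. h i x) = (\<Sum>i\<in>S. shift_delta a b (h i))"
  by (simp add: shift_delta_def sum_subtractf sum.distrib)

lemma shift_delta_add: "shift_delta a b (\<lambda>x. f x + g x) = shift_delta a b f + shift_delta a b g"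
  by (simp add: shift_delta_def algebra_simps)

lemma shift_delta_minus: "shift_delta a b (\<lambda>x. - f x) = - shift_delta a b f"
  by (simp add: shift_delta_def algebra_simps)

lemma shift_delta_sum_sgn:
  assumes "1 \<le> a" "a + 1 \<le> m" "2 \<le> b" "b \<le> m"
  shows "shift_delta a b (\<lambda>x. \<Sum>j\<in>{1..m}. sgn (x - j)) = 0"
  using assms by (simp add: shift_delta_def sum_sgn_interval)

(* The margin of the one-face die [x] against s(c,d), minus that against P_n. *)
definition deviation :: "int \<Rightarrow> int \<Rightarrow> int \<Rightarrow> int" where
  "deviation c d x = shift_delta c d (\<lambda>y. sgn (x - y))"

lemma deviation_eq:
  "deviation c d x = of_bool (x = d - 1) + of_bool (x = d) - of_bool (x = c) - of_bool (x = c + 1)"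
  by (auto simp: deviation_def shift_delta_def sgn_if)

lemma deviation_eq_0: "x \<notin> {c, c + 1, d - 1, d} \<Longrightarrow> deviation c d x = 0"
  by (auto simp: deviation_eq)

lemma deviation_neg: "deviation c d x < 0 \<Longrightarrow> x = c \<or> x = c + 1"
  and deviation_pos: "deviation c d x > 0 \<Longrightarrow> x = d - 1 \<or> x = d"
  by (auto simp: deviation_eq of_bool_def split: if_splits)

lemma deviation_at_ends:
  assumes "d \<noteq> c" "d \<noteq> c + 1"
  shows "deviation c d c = -1" and "deviation c d d = 1"
  using assms by (auto simp: deviation_eq)

lemma deviation_inj:
  assumes "deviation a b = deviation c d" "b \<noteq> a" "b \<noteq> a + 1" "d \<noteq> c" "d \<noteq> c + 1"
  shows "a = c \<and> b = d"
proof -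
  note ends = deviation_at_ends[OF assms(2,3)] deviation_at_ends[OF assms(4,5)]
  have "deviation c d a < 0" "deviation a b c < 0" "deviation c d b > 0" "deviation a b d > 0"
    using ends assms(1) by (metis zero_less_one neg_less_0_iff_less)+
  then have "a = c \<or> a = c + 1" "c = a \<or> c = a + 1" "b = d - 1 \<or> b = d" "d = b - 1 \<or> d = b"
    using deviation_neg deviation_pos by blast+
  then show ?thesis
    by auto
qed

definition step_params :: "nat \<Rightarrow> (int \<times> int) set" where
  "step_params n = {(a, b). 1 \<le> a \<and> a \<le> int n - 1 \<and> 2 \<le> b \<and> b \<le> int n \<and> b \<noteq> a \<and> b \<noteq> a + 1}"

fun step_die :: "nat \<Rightarrow> int \<times> int \<Rightarrow> int list" where
  "step_die n (a, b) = one_step n a b"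

fun score :: "int \<times> int \<Rightarrow> int \<times> int \<Rightarrow> int" where
  "score (a, b) (c, d) = shift_delta a b (deviation c d)"

lemma finite_step_params: "finite (step_params n)"
  by (rule finite_subset[of _ "{1..int n} \<times> {1..int n}"]) (auto simp: step_params_def)

lemma proper_one_step_dice_eq_image: "proper_one_step_dice n = step_die n ` step_params n"
  unfolding proper_one_step_dice_def step_params_def by force

(* Expand both dice around P_n: the P_n-against-P_n term vanishes by antisymmetry, and the two
   first-order terms vanish because x \<mapsto> \<Sum>j. sgn (x - j) is affine on the faces of P_n. *)
lemma margin_step_die:
  assumes "p \<in> step_params n" "q \<in> step_params n"
  shows "margin (step_die n p) (step_die n q) = score p q"
proof -
  obtain a b c d where pq: "p = (a, b)" "q = (c, d)"
    by fastforce
  define m where "m = int n"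
  define K where "K x = (\<Sum>j\<in>{1..m}. sgn (x - j)) + deviation c d x" for x
  have range: "1 \<le> a" "a + 1 \<le> m" "2 \<le> b" "b \<le> m" "a \<noteq> b"
    "1 \<le> c" "c + 1 \<le> m" "2 \<le> d" "d \<le> m" "c \<noteq> d"
    using assms by (auto simp: pq step_params_def m_def)
  have inner: "(\<Sum>j\<in>{1..m}. sgn (x - shift_faces c d j)) = K x" for x
    unfolding K_def deviation_def using range by (subst sum_shift_faces) auto
  have "(\<Sum>i\<in>{1..m}. deviation c d i) = shift_delta c d (\<lambda>y. \<Sum>i\<in>{1..m}. sgn (i - y))"
    by (simp add: deviation_def shift_delta_sum)
  also have "\<dots> = shift_delta c d (\<lambda>y. - (\<Sum>i\<in>{1..m}. sgn (y - i)))"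
    unfolding sum_negf [symmetric]
    by (rule arg_cong [where f = "shift_delta c d"]) (intro ext sum.cong refl sgn_diff_commute)
  also have "\<dots> = - shift_delta c d (\<lambda>y. \<Sum>i\<in>{1..m}. sgn (y - i))"
    by (rule shift_delta_minus)
  also have "\<dots> = 0"
    using range by (simp add: shift_delta_sum_sgn)
  finally have "(\<Sum>i\<in>{1..m}. K i) = 0"
    by (simp add: K_def sum.distrib sum_sgn_square_eq_0)
  moreover have "shift_delta a b K = score p q"
    using range by (simp add: pq K_def [abs_def] shift_delta_add shift_delta_sum_sgn)
  moreover have "margin (step_die n p) (step_die n q) = (\<Sum>i\<in>{1..m}. K (shift_faces a b i))"
    using inner by (simp add: pq one_step_eq_sort_map margin_sort_map m_def)
  ultimately show ?thesis
    using range by (simp add: sum_shift_faces)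
qed

lemma margin_singleton_step_die:
  assumes "(a, b) \<in> step_params n"
  shows "margin [t] (step_die n (a, b)) = (\<Sum>j\<in>{1..int n}. sgn (t - j)) + deviation a b t"
  using assms unfolding deviation_def
  by (simp add: one_step_eq_sort_map margin_singleton_sort_map, subst sum_shift_faces)
    (auto simp: step_params_def)

lemma inj_on_step_die: "inj_on (step_die n) (step_params n)"
proof (rule inj_onI, clarify)
  fix a b c d
  assume params: "(a, b) \<in> step_params n" "(c, d) \<in> step_params n"
    and "step_die n (a, b) = step_die n (c, d)"
  then have "deviation a b t = deviation c d t" for t
    using margin_singleton_step_die[OF params(1), of t]
      margin_singleton_step_die[OF params(2), of t]
    by simp
  then have "deviation a b = deviation c d" ..
  then show "a = c \<and> b = d"
    using params by (intro deviation_inj) (auto simp: step_params_def)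
qed

lemma score_swap: "score q p = - score p q"
  by (cases p; cases q) (simp add: deviation_eq shift_delta_def eq_commute algebra_simps)

(* As a deviation from P_n, s(b-1, a+1) is the negative of s(a,b).  For b = a + 2 it would be
   s(a+1, a+1), which is not a proper one-step die. *)
fun reflect_params :: "int \<times> int \<Rightarrow> int \<times> int" where
  "reflect_params (a, b) = (b - 1, a + 1)"

definition exceptional_params :: "(int \<times> int) set" where
  "exceptional_params = {(a, b). b = a + 2}"

lemma score_reflect_params: "score (reflect_params p) q = - score p q"
  by (cases p; cases q) (simp add: shift_delta_reflect)

lemma score_reflection_step_params:
  "score_reflection (step_params n) exceptional_params score reflect_params"
proof
  show "finite (step_params n)"
    by (rule finite_step_params)
  show "score y x = - score x y" for x y
    by (rule score_swap)
  show "reflect_params x \<in> step_params n - exceptional_params"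
    and "reflect_params (reflect_params x) = x"
    if "x \<in> step_params n - exceptional_params" for x
    using that by (cases x; auto simp: step_params_def exceptional_params_def)+
  show "score (reflect_params x) y = - score x y" for x y
    by (rule score_reflect_params)
qed

lemma score_nonzero_imp_close:
  assumes "score (a, b) (c, d) \<noteq> 0"
  shows "\<exists>x \<in> {a, a + 1, b - 1, b}. x \<in> {c, c + 1, d - 1, d}"
proof (rule ccontr)
  assume "\<not> ?thesis"
  then have "deviation c d x = 0" if "x \<in> {a, a + 1, b - 1, b}" for x
    using that by (intro deviation_eq_0) blast
  with assms show False
    by (simp add: shift_delta_def)
qed

lemma score_nonzero_family:
  assumes "y - x \<ge> 4" "z - y \<ge> 4"
  shows "score (x, y + 1) (x + 1, z + 1) \<noteq> 0"
    and "score (x + 1, z + 1) (y + 1, z + 2) \<noteq> 0"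
    and "score (x, y + 1) (y + 1, z + 2) \<noteq> 0"
  using assms by (simp_all add: shift_delta_def deviation_eq)

lemma intransitive_iff_cyclic:
  assumes "distinct [X, Y, Z]"
  shows "intransitive {X, Y, Z} \<longleftrightarrow> cyclic margin (X, Y, Z)"
proof
  assume "intransitive {X, Y, Z}"
  then obtain A B C where ABC: "{X, Y, Z} = {A, B, C}" and wins: "beats A B" "beats B C" "beats C A"
    unfolding intransitive_def by blast
  have "A \<in> {X, Y, Z}" "B \<in> {X, Y, Z}" "C \<in> {X, Y, Z}"
    using ABC by auto
  moreover have "A \<noteq> B" "B \<noteq> C" "C \<noteq> A"
    using wins by (auto simp: beats_iff_margin_pos margin_self)
  ultimately show "cyclic margin (X, Y, Z)"
    using wins by (auto simp: beats_iff_margin_pos)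
next
  assume "cyclic margin (X, Y, Z)"
  then have "beats X Y \<and> beats Y Z \<and> beats Z X \<or> beats X Z \<and> beats Z Y \<and> beats Y X"
    by (auto simp: beats_iff_margin_pos)
  moreover have "{X, Y, Z} = {X, Z, Y}"
    by auto
  ultimately show "intransitive {X, Y, Z}"
    unfolding intransitive_def by metis
qed

lemma tie_free_triple_iff:
  assumes "distinct [X, Y, Z]"
  shows "{X, Y, Z} \<in> tie_free_triples n
           \<longleftrightarrow> (X, Y, Z) \<in> ordered_tie_free margin (proper_one_step_dice n)"
  using assms margin_swap[of Y X] margin_swap[of Z Y] margin_swap[of Z X]
  by (auto simp: tie_free_triples_def ordered_tie_free_def ties_iff_margin_eq_0)

lemma ordered_tie_free_triples:
  "{(X, Y, Z). distinct [X, Y, Z] \<and> {X, Y, Z} \<in> tie_free_triples n}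
     = ordered_tie_free margin (proper_one_step_dice n)"
  using tie_free_triple_iff distinct_if_ordered_tie_free[where s = margin, OF margin_self] by blast

lemma ordered_intransitive_triples:
  "{(X, Y, Z). distinct [X, Y, Z] \<and> {X, Y, Z} \<in> intransitive_triples n}
     = {t \<in> ordered_tie_free margin (proper_one_step_dice n). cyclic margin t}"
  using tie_free_triple_iff intransitive_iff_cyclic
    distinct_if_ordered_tie_free[where s = margin, OF margin_self]
  unfolding intransitive_triples_def by blast

lemma card_ratio_eq:
  "real (card (intransitive_triples n)) / real (card (tie_free_triples n))
     = real (card {t \<in> ordered_tie_free score (step_params n). cyclic score t})
       / real (card (ordered_tie_free score (step_params n)))"
proof -
  have finite: "finite (tie_free_triples n)"
    by (rule finite_subset[of _ "Pow (proper_one_step_dice n)"])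
      (auto simp: tie_free_triples_def proper_one_step_dice_eq_image finite_step_params)
  have "card (ordered_tie_free margin (proper_one_step_dice n)) = 6 * card (tie_free_triples n)"
    unfolding ordered_tie_free_triples [symmetric]
    using finite by (rule card_enumerations_of_3_sets) (simp add: tie_free_triples_def)
  moreover have "card {t \<in> ordered_tie_free margin (proper_one_step_dice n). cyclic margin t}
      = 6 * card (intransitive_triples n)"
    unfolding ordered_intransitive_triples [symmetric]
    by (rule card_enumerations_of_3_sets)
      (auto simp: intransitive_triples_def tie_free_triples_def intro: finite_subset[OF _ finite])
  moreover note card_ordered_tie_free_image
    [OF inj_on_step_die[of n], where m = margin and s = score, OF margin_step_die]
  ultimately show ?thesis
    by (simp add: proper_one_step_dice_eq_image)
qed

section \<open>Counting\<close>

(* A nonzero score forces moved faces of the two dice to be adjacent, so an exceptional die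
   (p, p + 2) has at most 5 exceptional partners and at most 10 n partners overall. *)
lemma card_exceptional_pairs_le:
  "card {(u, v, w). u \<in> step_params n \<inter> exceptional_params \<and> v \<in> step_params n \<inter> exceptional_params
      \<and> w \<in> step_params n \<and> score u v \<noteq> 0 \<and> score u w \<noteq> 0} \<le> 50 * n ^ 2"
  (is "card ?P \<le> _")
proof -
  let ?Q = "{1..int n} \<times> {-2..2::int} \<times> {-1..3::int} \<times> {1..int n}"
  define near_first :: "int \<times> int \<times> int \<times> int \<Rightarrow> (int \<times> int) \<times> (int \<times> int) \<times> int \<times> int"
    where "near_first = (\<lambda>(p, i, j, d). ((p, p + 2), (p + i, p + i + 2), (p + j, d)))"
  define near_second :: "int \<times> int \<times> int \<times> int \<Rightarrow> (int \<times> int) \<times> (int \<times> int) \<times> int \<times> int"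
    where "near_second = (\<lambda>(p, i, j, c). ((p, p + 2), (p + i, p + i + 2), (c, p + j)))"
  have "?P \<subseteq> near_first ` ?Q \<union> near_second ` ?Q"
  proof
    fix t
    assume "t \<in> ?P"
    then obtain p b r e c d where t: "t = ((p, b), (r, e), c, d)"
      and "(p, b) \<in> step_params n \<inter> exceptional_params"
        "(r, e) \<in> step_params n \<inter> exceptional_params" "(c, d) \<in> step_params n"
      and nonzero: "score (p, b) (r, e) \<noteq> 0" "score (p, b) (c, d) \<noteq> 0"
      by auto
    then have params: "b = p + 2" "e = r + 2" "p \<in> {1..int n}" "c \<in> {1..int n}" "d \<in> {1..int n}"
      by (auto simp: step_params_def exceptional_params_def)
    have "r - p \<in> {-2..2}"
      using score_nonzero_imp_close[OF nonzero(1)] params by auto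
    moreover have "c - p \<in> {-1..3} \<or> d - p \<in> {-1..3}"
      using score_nonzero_imp_close[OF nonzero(2)] params by auto
    ultimately consider "(p, r - p, c - p, d) \<in> ?Q" | "(p, r - p, d - p, c) \<in> ?Q"
      using params by auto
    then show "t \<in> near_first ` ?Q \<union> near_second ` ?Q"
    proof cases
      case 1
      moreover have "t = near_first (p, r - p, c - p, d)"
        using params by (simp add: t near_first_def)
      ultimately show ?thesis
        by blast
    next
      case 2
      moreover have "t = near_second (p, r - p, d - p, c)"
        using params by (simp add: t near_second_def)
      ultimately show ?thesis
        by blast
    qed
  qed
  then have "card ?P \<le> card (near_first ` ?Q \<union> near_second ` ?Q)"
    by (intro card_mono) auto
  also have "\<dots> \<le> card ?Q + card ?Q"
    by (intro card_Un_le [THEN order_trans] add_mono card_image_le) auto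
  also have "\<dots> = 50 * n ^ 2"
    by (simp add: card_cartesian_product power2_eq_square)
  finally show ?thesis .
qed

lemma card_two_exceptional_le:
  "card {t \<in> ordered_tie_free score (step_params n). at_least_two_in exceptional_params t}
     \<le> 150 * n ^ 2"
proof -
  let ?V = "step_params n" and ?E = "exceptional_params"
  let ?P = "{(u, v, w). u \<in> ?V \<inter> ?E \<and> v \<in> ?V \<inter> ?E \<and> w \<in> ?V \<and> score u v \<noteq> 0 \<and> score u w \<noteq> 0}"
  define rotate :: "(int \<times> int) \<times> (int \<times> int) \<times> int \<times> int \<Rightarrow> _"
    where "rotate = (\<lambda>(u, v, w). (w, u, v))"
  define swap :: "(int \<times> int) \<times> (int \<times> int) \<times> int \<times> int \<Rightarrow> _"
    where "swap = (\<lambda>(u, v, w). (u, w, v))"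
  have finite_P: "finite ?P"
    by (rule finite_subset[of _ "?V \<times> ?V \<times> ?V"]) (auto simp: finite_step_params)
  have "{t \<in> ordered_tie_free score ?V. at_least_two_in ?E t} \<subseteq> ?P \<union> rotate ` ?P \<union> swap ` ?P"
  proof
    fix t
    assume "t \<in> {t \<in> ordered_tie_free score ?V. at_least_two_in ?E t}"
    then obtain x y z where t: "t = (x, y, z)"
      and tie_free: "(x, y, z) \<in> ordered_tie_free score ?V" and "at_least_two_in ?E (x, y, z)"
      by (cases t) auto
    moreover have "score y x \<noteq> 0" "score z y \<noteq> 0" "score z x \<noteq> 0"
      using tie_free score_swap[of x y] score_swap[of y z] score_swap[of x z]
      by (auto simp: ordered_tie_free_def)
    ultimately consider "(x, y, z) \<in> ?P" | "(y, z, x) \<in> ?P" | "(x, z, y) \<in> ?P"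
      by (auto simp: ordered_tie_free_def)
    then show "t \<in> ?P \<union> rotate ` ?P \<union> swap ` ?P"
    proof cases
      case 2
      then have "rotate (y, z, x) \<in> rotate ` ?P"
        by (rule imageI)
      then show ?thesis
        by (simp add: t rotate_def)
    next
      case 3
      then have "swap (x, z, y) \<in> swap ` ?P"
        by (rule imageI)
      then show ?thesis
        by (simp add: t swap_def)
    qed (simp add: t)
  qed
  then have "card {t \<in> ordered_tie_free score ?V. at_least_two_in ?E t}
      \<le> card (?P \<union> rotate ` ?P \<union> swap ` ?P)"
    using finite_P by (intro card_mono) auto
  also have "\<dots> \<le> card ?P + card ?P + card ?P"
    using finite_P by (intro card_Un_le [THEN order_trans] add_mono card_image_le) auto
  also have "\<dots> \<le> 150 * n ^ 2"
    using card_exceptional_pairs_le[of n] by simp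
  finally show ?thesis .
qed

lemma card_ordered_tie_free_ge:
  "((n - 8) div 3) ^ 3 \<le> card (ordered_tie_free score (step_params n))"
proof -
  define m where "m = int ((n - 8) div 3)"
  let ?Q = "{1..m} \<times> {m + 4..2 * m + 3} \<times> {2 * m + 7..3 * m + 6}"
  define triple :: "int \<times> int \<times> int \<Rightarrow> (int \<times> int) \<times> (int \<times> int) \<times> int \<times> int"
    where "triple = (\<lambda>(x, y, z). ((x, y + 1), (x + 1, z + 1), (y + 1, z + 2)))"
  have "triple ` ?Q \<subseteq> ordered_tie_free score (step_params n)"
  proof
    fix t
    assume "t \<in> triple ` ?Q"
    then obtain x y z where t: "t = triple (x, y, z)"
      and ranges: "x \<in> {1..m}" "y \<in> {m + 4..2 * m + 3}" "z \<in> {2 * m + 7..3 * m + 6}"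
      by auto
    then have "3 * m + 8 \<le> int n"
      unfolding m_def by auto presburger
    moreover have "y - x \<ge> 4" "z - y \<ge> 4"
      using ranges by auto
    ultimately show "t \<in> ordered_tie_free score (step_params n)"
      using ranges score_nonzero_family
      by (auto simp: t triple_def ordered_tie_free_def step_params_def simp del: score.simps)
  qed
  moreover have "inj_on triple ?Q"
    by (auto simp: inj_on_def triple_def)
  moreover have "card ?Q = ((n - 8) div 3) ^ 3"
    by (simp add: m_def card_cartesian_product power3_eq_cube)
  ultimately show ?thesis
    by (metis card_image card_mono finite_ordered_tie_free finite_step_params)
qed

lemma cyclic_ratio_deviation_le:
  assumes "n \<ge> 11"
  defines "T \<equiv> ordered_tie_free score (step_params n)"
  shows "\<bar>real (card {t \<in> T. cyclic score t}) / real (card T) - 1 / 4\<bar>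
           \<le> 3 * (150 * real n ^ 2) / (4 * ((real n - 10) / 3) ^ 3)"
proof -
  interpret score_reflection "step_params n" exceptional_params score reflect_params
    by (rule score_reflection_step_params)
  let ?C = "real (card {t \<in> T. cyclic score t})"
  let ?B = "real (card {t \<in> T. at_least_two_in exceptional_params t})"
  have "n - 10 \<le> 3 * ((n - 8) div 3)"
    using div_mult_mod_eq[of "n - 8" 3] mod_less_divisor[of 3 "n - 8"] by linarith
  then have "real (n - 10) \<le> real (3 * ((n - 8) div 3))"
    by (rule of_nat_mono)
  then have "(real n - 10) / 3 \<le> real ((n - 8) div 3)"
    using assms by (simp add: of_nat_diff)
  then have "((real n - 10) / 3) ^ 3 \<le> real ((n - 8) div 3) ^ 3"
    using assms by (intro power_mono) auto
  also have "\<dots> \<le> real (card T)"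
    unfolding T_def using card_ordered_tie_free_ge[of n] by (metis of_nat_le_iff of_nat_power)
  finally have lower: "((real n - 10) / 3) ^ 3 \<le> real (card T)" .
  have lower_pos: "0 < ((real n - 10) / 3) ^ 3"
    using assms by simp
  have exceptional: "?B \<le> 150 * real n ^ 2"
    using of_nat_mono [OF card_two_exceptional_le [of n], where 'a = real] by (simp add: T_def)
  have T_pos: "0 < real (card T)"
    using lower lower_pos by linarith
  have "?C / real (card T) - 1 / 4 = (4 * ?C - real (card T)) / (4 * real (card T))"
    using T_pos by (simp add: field_simps)
  then have "\<bar>?C / real (card T) - 1 / 4\<bar> = \<bar>4 * ?C - real (card T)\<bar> / (4 * real (card T))"
    using T_pos by (simp add: abs_divide)
  also have "\<dots> \<le> 3 * ?B / (4 * real (card T))"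
    using cyclic_near_quarter T_pos unfolding T_def by (intro divide_right_mono) auto
  also have "\<dots> \<le> 3 * (150 * real n ^ 2) / (4 * ((real n - 10) / 3) ^ 3)"
    using exceptional lower lower_pos by (intro frac_le) auto
  finally show ?thesis .
qed

theorem mainTheorem4:
  shows "(\<lambda>n. real (card (intransitive_triples n)) / real (card (tie_free_triples n)))
           \<longlonglongrightarrow> 1 / 4"
proof -
  define bound where "bound n = 3 * (150 * real n ^ 2) / (4 * ((real n - 10) / 3) ^ 3)" for n :: nat
  have "bound \<longlonglongrightarrow> 0"
    unfolding bound_def by real_asymp
  moreover have "eventually (\<lambda>n. norm (real (card (intransitive_triples n))
      / real (card (tie_free_triples n)) - 1 / 4) \<le> norm (bound n) * 1) sequentially"
    unfolding eventually_at_top_linorder bound_def card_ratio_eq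
    by (rule exI[of _ 11]) (auto intro: order_trans [OF cyclic_ratio_deviation_le])
  ultimately show ?thesis
    by (subst LIM_zero_iff [symmetric]) (rule tendsto_0_le)
qed

end
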